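(* The expected runtime (number of fitness evaluations) of the (1+1)~IA$^{\text{hyp}}_{\ge}$ on $\textsc{LeadingOnes}(x)=\sum_{i=1}^n\prod_{j=1}^i x_j$ is $\Theta(n^3)$.
   Context: The (1+1)~IA$^{\text{hyp}}_{\ge}$ keeps one bit string $x\in\{0,1\}^n$ (uniformly random initially); each iteration it creates $y$ by static hypermutation with FCM and sets $x:=y$ if $f(y)\ge f(x)$ (maximisation). Static hypermutation with FCM has a constant parameter $0<c\le1$ and mutation potential $M=cn$ (an integer): distinct bit positions are chosen uniformly at random without replacement and flipped one after another; each intermediate string is evaluated (one fitness evaluation each); the process stops at the first string $z$ with $f(z)\ge f(x)$ (constructive mutation) or after $M$ flips, and the last string is $y$. *)

theory Defs
  imports "HOL-Probability.Probability"
begin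

text \<open>Bit strings of length n are represented as bool lists of length n;
  position i (1-based in the paper) is list index i-1.\<close>

definition leading_ones :: "nat \<Rightarrow> bool list \<Rightarrow> nat" where
  "leading_ones n x = (\<Sum>i=1..n. \<Prod>j=1..i. (if x ! (j - 1) then 1 else 0))"

definition flip_bit :: "bool list \<Rightarrow> nat \<Rightarrow> bool list" where
  "flip_bit z p = z[p := \<not> z ! p]"

fun hyp_fcm :: "(bool list \<Rightarrow> nat) \<Rightarrow> bool list \<Rightarrow> bool list \<Rightarrow> nat list \<Rightarrow> nat \<Rightarrow> bool list \<times> nat" where
  "hyp_fcm f x z [] cnt = (z, cnt)"
| "hyp_fcm f x z (p # ps) cnt =
     (let z' = flip_bit z p in
      if f z' \<ge> f x then (z', Suc cnt) else hyp_fcm f x z' ps (Suc cnt))"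

text \<open>Positions chosen uniformly at random without replacement: the first M
  entries of a uniformly random ordering of {0..<n}.\<close>
definition hypermutation :: "nat \<Rightarrow> nat \<Rightarrow> (bool list \<Rightarrow> nat) \<Rightarrow> bool list \<Rightarrow> (bool list \<times> nat) pmf" where
  "hypermutation n M f x =
     map_pmf (\<lambda>ps. hyp_fcm f x x (take M ps) 0) (pmf_of_set (permutations_of_set {0..<n}))"

definition ia_step :: "nat \<Rightarrow> nat \<Rightarrow> (bool list \<Rightarrow> nat) \<Rightarrow> bool list \<Rightarrow> (bool list \<times> nat) pmf" where
  "ia_step n M f x =
     map_pmf (\<lambda>(y, c). (if f y \<ge> f x then y else x, c)) (hypermutation n M f x)"

text \<open>Distribution of the current string after k iterations, where the process
  is stopped (made absorbing) once the optimum (the all-ones string) is the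
  current string.\<close>
fun ia_state :: "nat \<Rightarrow> nat \<Rightarrow> (bool list \<Rightarrow> nat) \<Rightarrow> nat \<Rightarrow> bool list pmf" where
  "ia_state n M f 0 = pmf_of_set {x. length x = n}"
| "ia_state n M f (Suc k) =
     bind_pmf (ia_state n M f k)
       (\<lambda>x. if x = replicate n True then return_pmf x else map_pmf fst (ia_step n M f x))"

text \<open>Expected runtime: number of fitness evaluations until the optimum is found,
  counting 1 evaluation for the initial string plus all evaluations made by the
  hypermutations of all iterations before the optimum is reached.\<close>
definition ia_expected_runtime :: "nat \<Rightarrow> nat \<Rightarrow> (bool list \<Rightarrow> nat) \<Rightarrow> ennreal" where
  "ia_expected_runtime n M f =
     1 + (\<Sum>k. \<integral>\<^sup>+ x. (if x = replicate n True then 0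
                       else \<integral>\<^sup>+ yc. ennreal (real (snd yc)) \<partial>measure_pmf (ia_step n M f x))
                  \<partial>measure_pmf (ia_state n M f k))"

end

theory Submission
  imports Defs
begin

(* If the first bit flipped by the hypermutation is one of the l leading ones of x, every
   later intermediate string has fewer than l leading ones, so all M evaluations are spent
   and x is kept; otherwise the first flip is already accepted.  So an iteration at level l
   costs (l M + n - l) / n evaluations in expectation and leaves the level with probability
   1/n, and, as the bits behind the first zero stay uniformly random, after k iterations all
   strings with the same number of leading ones are equally likely.  Each level above the
   initial one is then visited with probability 1/2, which gives the expected remaining cost
   of every level; averaged over the current distribution it decreases in each iteration by
   exactly the expected cost of that iteration.  Hence the runtime is 1 plus the initial
   expected remaining cost, which lies between c n^3 / 16 and n^3. *)

section \<open>Leading ones\<close>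

definition lead_ones :: "bool list \<Rightarrow> nat" where
  "lead_ones x = length (takeWhile id x)"

lemma leading_ones_Cons:
  "leading_ones (Suc n) (b # x) = (if b then Suc (leading_ones n x) else 0)"
proof -
  let ?ind = "\<lambda>x j. if x ! (j - 1) then 1 else 0 :: nat"
  have prod_Cons: "(\<Prod>j=1..Suc i. ?ind (b # x) j) = ?ind [b] 1 * (\<Prod>j=1..i. ?ind x j)" for i
  proof -
    have "(\<Prod>j=1..Suc i. ?ind (b # x) j) = ?ind [b] 1 * (\<Prod>j=Suc 1..Suc i. ?ind (b # x) j)"
      by (subst prod.atLeast_Suc_atMost) auto
    also have "(\<Prod>j=Suc 1..Suc i. ?ind (b # x) j) = (\<Prod>j=1..i. ?ind (b # x) (Suc j))"
      by (rule prod.shift_bounds_cl_Suc_ivl)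
    also have "\<dots> = (\<Prod>j=1..i. ?ind x j)"
      by (rule prod.cong) (auto simp: nth_Cons')
    finally show ?thesis .
  qed
  have "leading_ones (Suc n) (b # x) = ?ind [b] 1 + (\<Sum>i=Suc 1..Suc n. \<Prod>j=1..i. ?ind (b # x) j)"
    unfolding leading_ones_def by (subst sum.atLeast_Suc_atMost) auto
  also have "(\<Sum>i=Suc 1..Suc n. \<Prod>j=1..i. ?ind (b # x) j) = (\<Sum>i=1..n. \<Prod>j=1..Suc i. ?ind (b # x) j)"
    by (rule sum.shift_bounds_cl_Suc_ivl)
  also have "\<dots> = ?ind [b] 1 * leading_ones n x"
    unfolding leading_ones_def prod_Cons sum_distrib_left ..
  finally show ?thesis by simp
qed

lemma leading_ones_eq_lead_ones: "length x = n \<Longrightarrow> leading_ones n x = lead_ones x"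
proof (induction x arbitrary: n)
  case Nil
  then show ?case by (simp add: leading_ones_def lead_ones_def)
next
  case (Cons b x)
  then show ?case by (cases n) (simp_all add: leading_ones_Cons lead_ones_def)
qed

lemma lead_ones_le_length: "lead_ones x \<le> length x"
  by (simp add: lead_ones_def length_takeWhile_le)

lemma nth_less_lead_ones: "j < lead_ones x \<Longrightarrow> x ! j"
  unfolding lead_ones_def by (metis id_apply nth_mem set_takeWhileD takeWhile_nth)

lemma not_nth_lead_ones: "lead_ones x < length x \<Longrightarrow> \<not> x ! lead_ones x"
  unfolding lead_ones_def using nth_length_takeWhile[of id x] by simp

lemma lead_ones_le_if_not_nth: "p < length x \<Longrightarrow> \<not> x ! p \<Longrightarrow> lead_ones x \<le> p"
  using nth_less_lead_ones[of p x] by (cases "p < lead_ones x") auto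

lemma lead_ones_eqI:
  assumes "m \<le> length x" "\<And>j. j < m \<Longrightarrow> x ! j" "m < length x \<Longrightarrow> \<not> x ! m"
  shows "lead_ones x = m"
proof (rule antisym)
  show "lead_ones x \<le> m"
    using assms lead_ones_le_if_not_nth[of m x] lead_ones_le_length[of x]
    by (cases "m < length x") auto
  show "m \<le> lead_ones x"
    using assms not_nth_lead_ones[of x] by (metis linorder_not_le order_less_le_trans)
qed

lemma lead_ones_less_length_iff:
  assumes "length x = n"
  shows "lead_ones x < n \<longleftrightarrow> x \<noteq> replicate n True"
proof
  assume "lead_ones x < n"
  then show "x \<noteq> replicate n True" by (auto simp: lead_ones_def)
next
  assume "x \<noteq> replicate n True"
  then have "\<not> (\<forall>j<n. x ! j)" using assms by (metis nth_equalityI length_replicate nth_replicate)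
  then show "lead_ones x < n"
    using assms nth_less_lead_ones[of _ x] lead_ones_le_length[of x] by (metis le_neq_implies_less)
qed

lemma length_flip_bit [simp]: "length (flip_bit z p) = length z"
  by (simp add: flip_bit_def)

lemma nth_flip_bit: "q < length z \<Longrightarrow> flip_bit z p ! q = (if q = p then \<not> z ! p else z ! q)"
  by (simp add: flip_bit_def nth_list_update)

lemma flip_bit_flip_bit [simp]: "flip_bit (flip_bit z p) p = z"
  by (cases "p < length z") (simp_all add: flip_bit_def list_update_beyond)

lemma flip_bit_eq_iff: "flip_bit x q = y \<longleftrightarrow> x = flip_bit y q"
  by (metis flip_bit_flip_bit)

lemma flip_bit_neq: "p < length z \<Longrightarrow> flip_bit z p \<noteq> z"
  by (metis nth_flip_bit)

lemma lead_ones_flip_bit_below: "p < lead_ones x \<Longrightarrow> lead_ones (flip_bit x p) = p"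
  using lead_ones_le_length[of x] by (intro lead_ones_eqI) (auto simp: nth_flip_bit nth_less_lead_ones)

lemma lead_ones_flip_bit_above:
  "lead_ones x < p \<Longrightarrow> p < length x \<Longrightarrow> lead_ones (flip_bit x p) = lead_ones x"
  using lead_ones_le_length[of x] not_nth_lead_ones[of x]
  by (intro lead_ones_eqI) (auto simp: nth_flip_bit nth_less_lead_ones)

lemma lead_ones_flip_bit_at:
  assumes "lead_ones x < length x"
  shows "lead_ones x < lead_ones (flip_bit x (lead_ones x))"
proof -
  let ?y = "flip_bit x (lead_ones x)"
  have ones: "j < Suc (lead_ones x) \<Longrightarrow> ?y ! j" for j
    using assms not_nth_lead_ones[OF assms] by (auto simp: nth_flip_bit nth_less_lead_ones less_Suc_eq)
  show ?thesis
  proof (cases "lead_ones ?y < length ?y")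
    case True
    then show ?thesis using ones not_nth_lead_ones[of ?y] by (meson not_less_eq)
  next
    case False
    then show ?thesis using assms by simp
  qed
qed

lemma finite_bool_lists_length: "finite {x :: bool list. length x = n}"
  using finite_lists_length_eq[of "UNIV :: bool set" n] by simp

lemma bool_lists_length_nonempty: "{x :: bool list. length x = n} \<noteq> {}"
  by (auto intro: exI[of _ "replicate n True"])

lemma card_lead_ones_level:
  assumes "m < n"
  shows "card {x :: bool list. length x = n \<and> lead_ones x = m} = 2 ^ (n - Suc m)"
proof -
  have "{x :: bool list. length x = n \<and> lead_ones x = m} =
        (\<lambda>s. replicate m True @ False # s) ` {s. length s = n - Suc m}"
  proof (intro set_eqI iffI)
    fix x assume x: "x \<in> {x :: bool list. length x = n \<and> lead_ones x = m}"
    then have "x = replicate m True @ False # drop (Suc m) x"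
      using assms nth_less_lead_ones[of _ x] not_nth_lead_ones[of x]
      by (intro nth_equalityI) (auto simp: nth_append nth_Cons' less_Suc_eq)
    then show "x \<in> (\<lambda>s. replicate m True @ False # s) ` {s. length s = n - Suc m}"
      using x by (intro image_eqI[where x = "drop (Suc m) x"]) auto
  next
    have "lead_ones (replicate m True @ False # s) = m" for s
      by (induction m) (auto simp: lead_ones_def)
    then show "x \<in> {x :: bool list. length x = n \<and> lead_ones x = m}"
      if "x \<in> (\<lambda>s. replicate m True @ False # s) ` {s. length s = n - Suc m}" for x
      using that assms by auto
  qed
  also have "card \<dots> = card {s :: bool list. length s = n - Suc m}"
    by (rule card_image) (auto simp: inj_on_def)
  also have "\<dots> = 2 ^ (n - Suc m)"
    using card_lists_length_eq[of "UNIV :: bool set"] by simp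
  finally show ?thesis .
qed

lemma sum_nonoptimal_by_levels:
  fixes F :: "nat \<Rightarrow> 'a :: semiring_1"
  shows "(\<Sum>x\<in>{x. length x = n \<and> x \<noteq> replicate n True}. F (lead_ones x)) =
         (\<Sum>m<n. 2 ^ (n - Suc m) * F m)"
proof -
  let ?S = "{x :: bool list. length x = n \<and> x \<noteq> replicate n True}"
  have "finite ?S"
    by (rule finite_subset[OF _ finite_bool_lists_length[of n]]) auto
  moreover have "lead_ones ` ?S \<subseteq> {..<n}"
    using lead_ones_less_length_iff by auto
  ultimately have "(\<Sum>x\<in>?S. F (lead_ones x)) = (\<Sum>m<n. \<Sum>x\<in>{x \<in> ?S. lead_ones x = m}. F m)"
    by (subst sum.group[symmetric]) (auto intro: sum.cong)
  also have "\<dots> = (\<Sum>m<n. 2 ^ (n - Suc m) * F m)"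
  proof (rule sum.cong[OF refl])
    fix m assume "m \<in> {..<n}"
    then have "{x \<in> ?S. lead_ones x = m} = {x. length x = n \<and> lead_ones x = m}"
      using lead_ones_less_length_iff by auto
    then show "(\<Sum>x\<in>{x \<in> ?S. lead_ones x = m}. F m) = 2 ^ (n - Suc m) * F m"
      using card_lead_ones_level[of m n] \<open>m \<in> {..<n}\<close> by (simp add: mult_of_nat_commute)
  qed
  finally show ?thesis .
qed

section \<open>One iteration on LeadingOnes\<close>

lemma hyp_fcm_below_lead_ones:
  assumes "p < lead_ones x" "length z = length x" "\<not> z ! p" "p \<notin> set ps"
  shows "\<exists>z'. hyp_fcm (leading_ones (length x)) x z ps cnt = (z', cnt + length ps)
                \<and> length z' = length x \<and> \<not> z' ! p"
  using assms(2-4)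
proof (induction ps arbitrary: z cnt)
  case Nil
  then show ?case by simp
next
  case (Cons q ps)
  let ?z = "flip_bit z q"
  have p: "p < length x" using assms(1) lead_ones_le_length[of x] by simp
  have z: "length ?z = length x" "\<not> ?z ! p" using Cons.prems p by (auto simp: nth_flip_bit)
  have "leading_ones (length x) ?z = lead_ones ?z" using z by (simp add: leading_ones_eq_lead_ones)
  also have "\<dots> < lead_ones x" using z p assms(1) lead_ones_le_if_not_nth[of p ?z] by simp
  finally have "\<not> leading_ones (length x) x \<le> leading_ones (length x) ?z"
    by (simp add: leading_ones_eq_lead_ones)
  then have "hyp_fcm (leading_ones (length x)) x z (q # ps) cnt
               = hyp_fcm (leading_ones (length x)) x ?z ps (Suc cnt)"
    by (simp add: Let_def)
  then show ?case using Cons.IH[OF z, of "Suc cnt"] Cons.prems by simp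
qed

definition ia_outcome :: "nat \<Rightarrow> bool list \<Rightarrow> nat \<Rightarrow> bool list \<times> nat" where
  "ia_outcome M x q = (if q < lead_ones x then (x, M) else (flip_bit x q, 1))"

lemma fst_ia_outcome: "fst (ia_outcome M x q) = (if q < lead_ones x then x else flip_bit x q)"
  by (simp add: ia_outcome_def)

lemma hyp_fcm_outcome:
  assumes "length x = n" "lead_ones x < n" "1 \<le> M" "M \<le> n"
    and "distinct (q # qs)" "set (q # qs) = {0..<n}"
  shows "(\<lambda>(y, c). (if leading_ones n y \<ge> leading_ones n x then y else x, c))
            (hyp_fcm (leading_ones n) x x (take M (q # qs)) 0) = ia_outcome M x q"
proof -
  obtain M' where M': "M = Suc M'" using assms by (cases M) auto
  have q: "q < n" using assms by auto
  have LO_x: "leading_ones n x = lead_ones x" using assms by (simp add: leading_ones_eq_lead_ones)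
  show ?thesis
  proof (cases "q < lead_ones x")
    case True
    let ?z = "flip_bit x q"
    have z: "length ?z = length x" "\<not> ?z ! q" using assms True q by (auto simp: nth_flip_bit nth_less_lead_ones)
    have "q \<notin> set (take M' qs)" using assms by (auto dest: in_set_takeD)
    then obtain z' where z': "hyp_fcm (leading_ones n) x ?z (take M' qs) 1 = (z', 1 + length (take M' qs))"
      and "length z' = n" "\<not> z' ! q"
      using hyp_fcm_below_lead_ones[OF True z] assms(1) by blast
    then have "leading_ones n z' < leading_ones n x"
      using True q LO_x lead_ones_le_if_not_nth[of q z'] by (simp add: leading_ones_eq_lead_ones)
    moreover have "leading_ones n ?z < leading_ones n x"
      using True LO_x z assms(1) by (simp add: leading_ones_eq_lead_ones lead_ones_flip_bit_below)
    moreover have "length qs = n - 1" using assms distinct_card[of "q # qs"] by auto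
    ultimately show ?thesis using True z' M' assms(4) by (simp add: ia_outcome_def Let_def)
  next
    case False
    then have "leading_ones n x \<le> leading_ones n (flip_bit x q)"
      using assms q lead_ones_flip_bit_at[of x] lead_ones_flip_bit_above[of x q]
      by (cases "q = lead_ones x") (simp_all add: leading_ones_eq_lead_ones)
    then show ?thesis using False M' by (simp add: ia_outcome_def Let_def)
  qed
qed

lemma ia_step_leading_ones:
  assumes "length x = n" "lead_ones x < n" "1 \<le> M" "M \<le> n"
  shows "ia_step n M (leading_ones n) x = map_pmf (ia_outcome M x) (pmf_of_set {0..<n})"
proof -
  have ne: "{0..<n} \<noteq> {}" using assms by auto
  have "ia_step n M (leading_ones n) x =
     map_pmf (\<lambda>ps. (\<lambda>(y, c). (if leading_ones n y \<ge> leading_ones n x then y else x, c))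
            (hyp_fcm (leading_ones n) x x (take M ps) 0)) (pmf_of_set (permutations_of_set {0..<n}))"
    by (simp add: ia_step_def hypermutation_def pmf.map_comp o_def)
  also have "\<dots> = do { q \<leftarrow> pmf_of_set {0..<n};
                       qs \<leftarrow> pmf_of_set (permutations_of_set ({0..<n} - {q}));
                       return_pmf (ia_outcome M x q) }"
    unfolding random_permutation_of_set[OF finite_atLeastLessThan ne] map_bind_pmf map_return_pmf
  proof (intro bind_pmf_cong refl, goal_cases)
    case (1 q qs)
    then have "distinct (q # qs)" "set (q # qs) = {0..<n}"
      using ne by (auto simp: permutations_of_set_def[symmetric] dest: permutations_of_setD)
    then show ?case by (simp only: hyp_fcm_outcome[OF assms])
  qed
  also have "\<dots> = map_pmf (ia_outcome M x) (pmf_of_set {0..<n})"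
    by (simp add: bind_pmf_const map_pmf_def)
  finally show ?thesis .
qed

lemma pmf_ia_step_leading_ones:
  assumes "length x = n" "lead_ones x < n" "1 \<le> M" "M \<le> n"
  shows "pmf (map_pmf fst (ia_step n M (leading_ones n) x)) y =
           (\<Sum>q<n. if fst (ia_outcome M x q) = y then 1 else 0) / real n"
proof -
  have "pmf (map_pmf fst (ia_step n M (leading_ones n) x)) y =
        real (card ({0..<n} \<inter> (fst \<circ> ia_outcome M x) -` {y})) / real n"
    using assms by (simp add: ia_step_leading_ones pmf.map_comp pmf_map measure_pmf_of_set)
  also have "card ({0..<n} \<inter> (fst \<circ> ia_outcome M x) -` {y}) = card {q\<in>{..<n}. fst (ia_outcome M x q) = y}"
    by (rule arg_cong[where f = card]) auto
  finally show ?thesis by (simp add: sum.inter_filter[symmetric])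
qed

definition level_cost :: "nat \<Rightarrow> nat \<Rightarrow> nat \<Rightarrow> real" where
  "level_cost n M l = real l * real M + real (n - l)"

lemma level_cost_nonneg: "0 \<le> level_cost n M l"
  by (simp add: level_cost_def)

lemma level_cost_ge: "1 \<le> M \<Longrightarrow> l \<le> n \<Longrightarrow> real n \<le> level_cost n M l"
  using mult_left_mono[of 1 "real M" "real l"] by (simp add: level_cost_def of_nat_diff)

lemma level_cost_le: "M \<le> n \<Longrightarrow> l < n \<Longrightarrow> level_cost n M l \<le> real n ^ 2"
proof -
  assume "M \<le> n" "l < n"
  then have "real l * real M \<le> real l * real n" "(real n - real l) * (1 - real n) \<le> 0"
    by (auto simp: mult_left_mono intro: mult_nonneg_nonpos)
  then show ?thesis
    using \<open>l < n\<close> by (simp add: level_cost_def of_nat_diff power2_eq_square algebra_simps)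
qed

lemma nn_integral_ia_step_cost:
  assumes "length x = n" "lead_ones x < n" "1 \<le> M" "M \<le> n"
  shows "(\<integral>\<^sup>+yc. ennreal (real (snd yc)) \<partial>measure_pmf (ia_step n M (leading_ones n) x))
           = ennreal (level_cost n M (lead_ones x) / real n)"
proof -
  have "(\<Sum>q\<in>{0..<n}. real (snd (ia_outcome M x q))) = (\<Sum>q\<in>{0..<n}. if q < lead_ones x then real M else 1)"
    by (rule sum.cong) (auto simp: ia_outcome_def)
  also have "\<dots> = (\<Sum>q\<in>{0..<lead_ones x}. real M) + (\<Sum>q\<in>{lead_ones x..<n}. 1)"
  proof -
    have "{0..<n} \<inter> {q. q < lead_ones x} = {0..<lead_ones x}"
         "{0..<n} \<inter> - {q. q < lead_ones x} = {lead_ones x..<n}"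
      using assms(2) by auto
    then show ?thesis by (simp add: sum.If_cases)
  qed
  also have "\<dots> = level_cost n M (lead_ones x)"
    by (simp add: level_cost_def)
  finally have "(\<Sum>q\<in>{0..<n}. ennreal (real (snd (ia_outcome M x q)))) = ennreal (level_cost n M (lead_ones x))"
    by (subst sum_ennreal) auto
  then show ?thesis
    using assms by (simp add: ia_step_leading_ones nn_integral_pmf_of_set divide_ennreal
                              level_cost_nonneg ennreal_of_nat_eq_real_of_nat)
qed

lemma ia_outcome_preimage:
  assumes "length y = n" "lead_ones y < n" "q < n"
  shows "{x. length x = n \<and> x \<noteq> replicate n True \<and> fst (ia_outcome M x q) = y} =
    (if q < lead_ones y then {y, flip_bit y q} else if q = lead_ones y then {} else {flip_bit y q})"
    (is "?A = ?B")
proof (intro set_eqI iffI)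
  fix x assume x: "x \<in> ?A"
  show "x \<in> ?B"
  proof (cases "q < lead_ones x")
    case True
    then show ?thesis using x by (auto simp: fst_ia_outcome)
  next
    case False
    then have x_eq: "x = flip_bit y q" using x by (auto simp: fst_ia_outcome flip_bit_eq_iff)
    then have "q \<noteq> lead_ones y" using False lead_ones_flip_bit_at[of y] assms by auto
    then show ?thesis using x_eq by auto
  qed
next
  fix x assume x: "x \<in> ?B"
  have "q \<noteq> lead_ones y \<Longrightarrow> lead_ones (flip_bit y q) < n"
    using assms lead_ones_flip_bit_below[of q y] lead_ones_flip_bit_above[of y q]
    by (cases "q < lead_ones y") auto
  then show "x \<in> ?A"
    using x assms lead_ones_less_length_iff[of _ n] lead_ones_flip_bit_below[of q y]
      lead_ones_flip_bit_above[of y q]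
    by (auto simp: fst_ia_outcome split: if_splits)
qed

section \<open>The distribution of the current string\<close>

fun level_prob :: "nat \<Rightarrow> nat \<Rightarrow> nat \<Rightarrow> real" where
  "level_prob n 0 m = 1 / 2 ^ n"
| "level_prob n (Suc k) m = (1 - 1 / real n) * level_prob n k m + (\<Sum>l<m. level_prob n k l) / real n"

lemma level_prob_nonneg: "0 \<le> level_prob n k m"
proof (induction k arbitrary: m)
  case 0
  then show ?case by simp
next
  case (Suc k)
  have "0 \<le> 1 - 1 / real n" by (cases n) (auto simp: field_simps)
  then show ?case
    using Suc by (auto intro!: add_nonneg_nonneg mult_nonneg_nonneg sum_nonneg divide_nonneg_nonneg)
qed

lemma level_prob_Suc_sum:
  assumes "m < n"
  shows "(\<Sum>q<n. if q < m then level_prob n k m + level_prob n k q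
                 else if q = m then 0 else level_prob n k m) / real n = level_prob n (Suc k) m"
proof -
  let ?p = "level_prob n k"
  have "(\<Sum>q<n. if q < m then ?p m + ?p q else if q = m then 0 else ?p m) =
        (\<Sum>q<n. if q < m then ?p q else 0) + (\<Sum>q<n. if q = m then 0 else ?p m)"
    by (subst sum.distrib[symmetric]) (rule sum.cong, auto)
  also have "(\<Sum>q<n. if q = m then 0 else ?p m) = (\<Sum>q\<in>{..<n} - {m}. ?p m)"
    by (simp add: sum.If_cases Diff_eq)
  also have "(\<Sum>q<n. if q < m then ?p q else 0) = (\<Sum>q<m. ?p q)"
    using assms by (subst sum.inter_filter[symmetric]) (auto intro: sum.cong)
  finally show ?thesis using assms by (simp add: field_simps of_nat_diff)
qed

lemma set_pmf_ia_state:
  assumes "1 \<le> M" "M \<le> n"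
  shows "set_pmf (ia_state n M (leading_ones n) k) \<subseteq> {x. length x = n}"
proof (induction k)
  case 0
  then show ?case by (simp add: set_pmf_of_set[OF bool_lists_length_nonempty finite_bool_lists_length])
next
  case (Suc k)
  show ?case
  proof
    fix z assume "z \<in> set_pmf (ia_state n M (leading_ones n) (Suc k))"
    then obtain x where x: "x \<in> set_pmf (ia_state n M (leading_ones n) k)"
      and z: "z \<in> set_pmf (if x = replicate n True then return_pmf x
                             else map_pmf fst (ia_step n M (leading_ones n) x))"
      by auto
    have "length x = n" using x Suc by auto
    then show "z \<in> {x. length x = n}"
      using z assms lead_ones_less_length_iff[of x n]
      by (cases "x = replicate n True") (auto simp: ia_step_leading_ones ia_outcome_def)
  qed
qed

lemma pmf_ia_state_Suc:
  assumes "1 \<le> M" "M \<le> n" "length y = n" "lead_ones y < n"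
  shows "pmf (ia_state n M (leading_ones n) (Suc k)) y =
    (\<Sum>q<n. measure (ia_state n M (leading_ones n) k) {x. length x = n \<and> x \<noteq> replicate n True \<and> fst (ia_outcome M x q) = y}) / real n"
proof -
  let ?\<mu> = "ia_state n M (leading_ones n) k"
  let ?L = "{x :: bool list. length x = n}"
  let ?P = "\<lambda>q x. x \<noteq> replicate n True \<and> fst (ia_outcome M x q) = y"
  have fin: "finite ?L" by (rule finite_bool_lists_length)
  have "pmf (ia_state n M (leading_ones n) (Suc k)) y
          = (\<integral>x. pmf (if x = replicate n True then return_pmf x
                       else map_pmf fst (ia_step n M (leading_ones n) x)) y \<partial>?\<mu>)"
    by (simp add: pmf_bind)
  also have "\<dots> = (\<Sum>x\<in>?L. pmf ?\<mu> x * pmf (if x = replicate n True then return_pmf x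
                                else map_pmf fst (ia_step n M (leading_ones n) x)) y)"
    using set_pmf_ia_state[OF assms(1,2)] by (subst integral_measure_pmf[OF fin]) auto
  also have "\<dots> = (\<Sum>x\<in>?L. pmf ?\<mu> x * ((\<Sum>q<n. if ?P q x then 1 else 0) / real n))"
  proof (rule sum.cong[OF refl])
    fix x assume "x \<in> ?L"
    then show "pmf ?\<mu> x * pmf (if x = replicate n True then return_pmf x
                                else map_pmf fst (ia_step n M (leading_ones n) x)) y
               = pmf ?\<mu> x * ((\<Sum>q<n. if ?P q x then 1 else 0) / real n)"
      using assms(3,4) lead_ones_less_length_iff[of _ n]
      by (cases "x = replicate n True") (auto simp: pmf_ia_step_leading_ones[OF _ _ assms(1,2)])
  qed
  also have "\<dots> = (\<Sum>x\<in>?L. \<Sum>q<n. if ?P q x then pmf ?\<mu> x else 0) / real n"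
  proof -
    have "pmf ?\<mu> x * ((\<Sum>q<n. if ?P q x then 1 else 0) / real n)
            = (\<Sum>q<n. if ?P q x then pmf ?\<mu> x else 0) / real n" for x
      by (simp add: sum_distrib_left if_distrib cong: if_cong)
    then show ?thesis by (simp add: sum_divide_distrib)
  qed
  also have "\<dots> = (\<Sum>q<n. \<Sum>x\<in>?L. if ?P q x then pmf ?\<mu> x else 0) / real n"
    by (subst sum.swap) simp
  also have "\<dots> = (\<Sum>q<n. measure ?\<mu> {x \<in> ?L. ?P q x}) / real n"
    using fin by (simp add: sum.inter_filter[symmetric] measure_measure_pmf_finite)
  finally show ?thesis by simp
qed

lemma pmf_ia_state:
  assumes "1 \<le> M" "M \<le> n" "length y = n" "lead_ones y < n"
  shows "pmf (ia_state n M (leading_ones n) k) y = level_prob n k (lead_ones y)"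
  using assms(3,4)
proof (induction k arbitrary: y)
  case 0
  then show ?case
    using card_lists_length_eq[of "UNIV :: bool set" n]
    by (simp add: pmf_of_set[OF bool_lists_length_nonempty finite_bool_lists_length])
next
  case (Suc k)
  let ?\<mu> = "ia_state n M (leading_ones n) k"
  let ?p = "level_prob n k"
  let ?m = "lead_ones y"
  have "measure ?\<mu> {x. length x = n \<and> x \<noteq> replicate n True \<and> fst (ia_outcome M x q) = y} =
        (if q < ?m then ?p ?m + ?p q else if q = ?m then 0 else ?p ?m)" if "q < n" for q
  proof -
    have flip: "length (flip_bit y q) = n" "flip_bit y q \<noteq> y"
      using Suc.prems that flip_bit_neq[of q y] by auto
    consider "q < ?m" | "q = ?m" | "?m < q" by linarith
    then show ?thesis
    proof cases
      case 1
      then show ?thesis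
        using flip Suc.IH[OF Suc.prems] Suc.IH[OF flip(1)] that
        by (simp add: ia_outcome_preimage[OF Suc.prems that] measure_measure_pmf_finite
                      lead_ones_flip_bit_below)
    next
      case 3
      then show ?thesis
        using Suc.prems Suc.IH[OF flip(1)] that
        by (simp add: ia_outcome_preimage[OF Suc.prems that] measure_pmf_single lead_ones_flip_bit_above)
    qed (unfold ia_outcome_preimage[OF Suc.prems that], simp)
  qed
  then have "pmf (ia_state n M (leading_ones n) (Suc k)) y =
      (\<Sum>q<n. if q < ?m then ?p ?m + ?p q else if q = ?m then 0 else ?p ?m) / real n"
    unfolding pmf_ia_state_Suc[OF assms(1,2) Suc.prems] by (intro arg_cong2[where f = "(/)"] sum.cong) auto
  then show ?case
    using level_prob_Suc_sum[OF Suc.prems(2)] by simp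
qed

lemma measure_ia_state_nonoptimal:
  assumes "1 \<le> M" "M \<le> n"
  shows "measure (ia_state n M (leading_ones n) k) {x. length x = n \<and> x \<noteq> replicate n True}
           = (\<Sum>m<n. 2 ^ (n - Suc m) * level_prob n k m)"
proof -
  let ?S = "{x :: bool list. length x = n \<and> x \<noteq> replicate n True}"
  have "finite ?S"
    by (rule finite_subset[OF _ finite_bool_lists_length[of n]]) auto
  then have "measure (ia_state n M (leading_ones n) k) ?S = (\<Sum>x\<in>?S. level_prob n k (lead_ones x))"
    using pmf_ia_state[OF assms] lead_ones_less_length_iff
    by (simp add: measure_measure_pmf_finite)
  then show ?thesis by (simp add: sum_nonoptimal_by_levels)
qed

definition step_cost :: "nat \<Rightarrow> nat \<Rightarrow> nat \<Rightarrow> real" where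
  "step_cost n M k = (\<Sum>m<n. 2 ^ (n - Suc m) * (level_prob n k m * (level_cost n M m / real n)))"

lemma step_cost_nonneg: "0 \<le> step_cost n M k"
  by (simp add: step_cost_def sum_nonneg level_prob_nonneg level_cost_nonneg)

lemma nn_integral_ia_state_cost:
  assumes "1 \<le> M" "M \<le> n"
  shows "(\<integral>\<^sup>+ x. (if x = replicate n True then 0
                   else \<integral>\<^sup>+ yc. ennreal (real (snd yc)) \<partial>measure_pmf (ia_step n M (leading_ones n) x))
              \<partial>measure_pmf (ia_state n M (leading_ones n) k)) = ennreal (step_cost n M k)"
proof -
  let ?L = "{x :: bool list. length x = n}"
  let ?S = "{x :: bool list. length x = n \<and> x \<noteq> replicate n True}"
  let ?G = "\<lambda>x. if x = replicate n True then 0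
                else level_prob n k (lead_ones x) * (level_cost n M (lead_ones x) / real n)"
  have "(\<integral>\<^sup>+ x. (if x = replicate n True then 0
                   else \<integral>\<^sup>+ yc. ennreal (real (snd yc)) \<partial>measure_pmf (ia_step n M (leading_ones n) x))
              \<partial>measure_pmf (ia_state n M (leading_ones n) k)) = (\<Sum>x\<in>?L. ennreal (?G x))"
  proof (subst nn_integral_measure_pmf_support[where A = ?L], goal_cases)
    case 4
    show ?case
    proof (rule sum.cong[OF refl])
      fix x assume "x \<in> ?L"
      then show "(if x = replicate n True then 0 else \<integral>\<^sup>+ yc. ennreal (real (snd yc))
                    \<partial>measure_pmf (ia_step n M (leading_ones n) x))
                 * ennreal (pmf (ia_state n M (leading_ones n) k) x) = ennreal (?G x)"
        using lead_ones_less_length_iff[of x n] pmf_ia_state[OF assms, of x k]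
          nn_integral_ia_step_cost[OF _ _ assms, of x]
        by (auto simp: ennreal_mult[symmetric] level_prob_nonneg level_cost_nonneg mult.commute)
    qed
  qed (use set_pmf_ia_state[OF assms, of k] finite_bool_lists_length[of n] in auto)
  also have "\<dots> = ennreal (\<Sum>x\<in>?S. level_prob n k (lead_ones x) * (level_cost n M (lead_ones x) / real n))"
    using finite_bool_lists_length[of n]
    by (subst sum_ennreal)
       (auto simp: sum.If_cases Collect_conj_eq[symmetric] Int_def
             intro!: mult_nonneg_nonneg divide_nonneg_nonneg level_prob_nonneg level_cost_nonneg)
  also have "\<dots> = ennreal (step_cost n M k)"
    by (simp only: step_cost_def
          sum_nonoptimal_by_levels[where F = "\<lambda>l. level_prob n k l * (level_cost n M l / real n)"])
  finally show ?thesis .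
qed

section \<open>A potential with exact drift\<close>

lemma sums_of_exact_drift:
  fixes a H :: "nat \<Rightarrow> real"
  assumes drift: "\<And>k. H k - H (Suc k) = a k"
    and nonneg: "\<And>k. 0 \<le> a k" "\<And>k. 0 \<le> H k"
    and bounded: "\<And>k. H k \<le> C * a k"
  shows "a sums H 0"
proof -
  have partial: "(\<Sum>k<K. a k) = H 0 - H K" for K
    using sum_lessThan_telescope'[of H K] drift by simp
  have "summable a"
    using partial nonneg by (intro summableI_nonneg_bounded[where x = "H 0"]) auto
  then have lim: "(\<lambda>k. C * a k) \<longlonglongrightarrow> 0"
    using tendsto_mult_right_zero summable_LIMSEQ_zero by blast
  have "eventually (\<lambda>k. 0 \<le> H k) sequentially" "eventually (\<lambda>k. H k \<le> C * a k) sequentially"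
    using nonneg(2) bounded by simp_all
  then have "H \<longlonglongrightarrow> 0"
    by (rule tendsto_sandwich[OF _ _ tendsto_const lim])
  then have "(\<lambda>K. H 0 - H K) \<longlonglongrightarrow> H 0 - 0"
    by (intro tendsto_diff tendsto_const)
  then show ?thesis
    unfolding sums_def partial by simp
qed

definition tail_cost :: "nat \<Rightarrow> nat \<Rightarrow> nat \<Rightarrow> real" where
  "tail_cost n M l = (\<Sum>i\<in>{l..<n}. level_cost n M i)"

(* The number 2^(n-l-1) of strings on level l times their expected remaining cost
   (level_cost l + tail_cost l) / 2: level l itself costs level_cost l and each higher
   level is visited with probability 1/2. *)
definition potential :: "nat \<Rightarrow> nat \<Rightarrow> nat \<Rightarrow> real" where
  "potential n M l = 2 ^ (n - l) * (level_cost n M l + tail_cost n M l) / 4"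

definition expected_potential :: "nat \<Rightarrow> nat \<Rightarrow> nat \<Rightarrow> real" where
  "expected_potential n M k = (\<Sum>m<n. level_prob n k m * potential n M m)"

lemma tail_cost_Suc: "l < n \<Longrightarrow> tail_cost n M l = level_cost n M l + tail_cost n M (Suc l)"
  unfolding tail_cost_def by (simp add: sum.atLeast_Suc_lessThan)

lemma power_two_diff_Suc: "l < n \<Longrightarrow> (2 :: real) ^ (n - l) = 2 * 2 ^ (n - Suc l)"
  by (metis Suc_diff_Suc power_Suc)

lemma sum_potential_above: "l \<le> n \<Longrightarrow> (\<Sum>m\<in>{l..<n}. potential n M m) = 2 ^ (n - l) * tail_cost n M l / 2"
proof (induction l rule: inc_induct)
  case base
  then show ?case by (simp add: tail_cost_def)
next
  case (step l)
  then show ?case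
    by (simp add: sum.atLeast_Suc_lessThan potential_def tail_cost_Suc[of l n M]
                  power_two_diff_Suc[of l n] field_simps)
qed

lemma potential_minus_above:
  "l < n \<Longrightarrow> potential n M l - (\<Sum>m\<in>{Suc l..<n}. potential n M m) = 2 ^ (n - Suc l) * level_cost n M l"
  using sum_potential_above[of "Suc l" n M]
  by (simp add: potential_def tail_cost_Suc[of l n M] power_two_diff_Suc[of l n] field_simps)

lemma sum_lessThan_triangle_swap:
  "(\<Sum>m<n. \<Sum>l<m. f l m) = (\<Sum>l<n. \<Sum>m\<in>{Suc l..<n}. f l m :: 'a :: comm_monoid_add)"
  by (induction n) (simp_all add: sum.distrib)

lemma expected_potential_drift:
  assumes "0 < n"
  shows "expected_potential n M k - expected_potential n M (Suc k) = step_cost n M k"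
proof -
  let ?p = "level_prob n k" and ?h = "potential n M"
  have "expected_potential n M k - expected_potential n M (Suc k) =
        (1 / real n) * ((\<Sum>m<n. ?p m * ?h m) - (\<Sum>m<n. \<Sum>l<m. ?p l * ?h m))"
    by (simp add: expected_potential_def algebra_simps sum_subtractf[symmetric] sum_distrib_left
                  sum_distrib_right sum_divide_distrib)
  also have "(\<Sum>m<n. \<Sum>l<m. ?p l * ?h m) = (\<Sum>l<n. ?p l * (\<Sum>m\<in>{Suc l..<n}. ?h m))"
    by (simp add: sum_lessThan_triangle_swap sum_distrib_left)
  also have "(\<Sum>m<n. ?p m * ?h m) - \<dots> = (\<Sum>l<n. ?p l * (2 ^ (n - Suc l) * level_cost n M l))"
    by (simp add: sum_subtractf[symmetric] right_diff_distrib[symmetric] potential_minus_above)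
  finally show ?thesis
    by (simp add: step_cost_def sum_distrib_left mult_ac)
qed

lemma potential_nonneg: "0 \<le> potential n M m"
  by (simp add: potential_def tail_cost_def level_cost_nonneg sum_nonneg)

lemma expected_potential_nonneg: "0 \<le> expected_potential n M k"
  by (simp add: expected_potential_def sum_nonneg level_prob_nonneg potential_nonneg)

lemma potential_le:
  assumes "M \<le> n" "m < n"
  shows "potential n M m \<le> real n ^ 3 * 2 ^ (n - Suc m)"
proof -
  have "tail_cost n M m \<le> real (card {m..<n}) * real n ^ 2"
    unfolding tail_cost_def using assms level_cost_le by (intro sum_bounded_above) auto
  also have "\<dots> \<le> real n * real n ^ 2"
    by (intro mult_right_mono) auto
  also have "\<dots> = real n ^ 3"
    by (simp add: power3_eq_cube power2_eq_square)
  finally have "level_cost n M m + tail_cost n M m \<le> 2 * real n ^ 3"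
    using level_cost_le[OF assms] power_increasing[of 2 3 "real n"] assms by simp
  then have "(level_cost n M m + tail_cost n M m) * 2 ^ (n - Suc m) \<le> 2 * real n ^ 3 * 2 ^ (n - Suc m)"
    by (rule mult_right_mono) simp
  then show ?thesis
    using power_two_diff_Suc[OF assms(2)] by (simp add: potential_def field_simps)
qed

lemma expected_potential_le:
  assumes "M \<le> n"
  shows "expected_potential n M k \<le> real n ^ 3 * (\<Sum>m<n. 2 ^ (n - Suc m) * level_prob n k m)"
  unfolding expected_potential_def sum_distrib_left
  using assms potential_le level_prob_nonneg
  by (intro sum_mono) (simp add: mult_left_mono mult_ac)

lemma expected_potential_le_step_cost:
  assumes "1 \<le> M" "M \<le> n"
  shows "expected_potential n M k \<le> real n ^ 3 * step_cost n M k"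
proof -
  have "level_prob n k m * 1 \<le> level_prob n k m * (level_cost n M m / real n)" if "m < n" for m
    using level_cost_ge[OF assms(1), of m n] that level_prob_nonneg[of n k m]
    by (intro mult_left_mono) auto
  then have "(\<Sum>m<n. 2 ^ (n - Suc m) * level_prob n k m) \<le> step_cost n M k"
    unfolding step_cost_def by (intro sum_mono mult_left_mono) simp_all
  then have "real n ^ 3 * (\<Sum>m<n. 2 ^ (n - Suc m) * level_prob n k m) \<le> real n ^ 3 * step_cost n M k"
    by (rule mult_left_mono) simp
  then show ?thesis
    using expected_potential_le[OF assms(2), of k] by linarith
qed

lemma ia_expected_runtime_eq:
  assumes "1 \<le> M" "M \<le> n"
  shows "ia_expected_runtime n M (leading_ones n) = 1 + ennreal (expected_potential n M 0)"
proof -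
  have sums: "step_cost n M sums expected_potential n M 0"
  proof (rule sums_of_exact_drift)
    show "expected_potential n M k - expected_potential n M (Suc k) = step_cost n M k" for k
      using assms by (intro expected_potential_drift) simp
    show "expected_potential n M k \<le> real n ^ 3 * step_cost n M k" for k
      by (rule expected_potential_le_step_cost[OF assms])
  qed (rule step_cost_nonneg expected_potential_nonneg)+
  have "(\<Sum>k. ennreal (step_cost n M k)) = ennreal (expected_potential n M 0)"
    using suminf_ennreal2[OF step_cost_nonneg sums_summable[OF sums]] sums_unique[OF sums] by simp
  then show ?thesis
    unfolding ia_expected_runtime_def nn_integral_ia_state_cost[OF assms] by simp
qed

section \<open>Bounds on the initial potential\<close>

lemma expected_potential_initial_le:
  assumes "1 \<le> M" "M \<le> n"
  shows "expected_potential n M 0 \<le> real n ^ 3"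
proof -
  have "(\<Sum>m<n. 2 ^ (n - Suc m) * level_prob n 0 m) \<le> 1"
    unfolding measure_ia_state_nonoptimal[OF assms, of 0, symmetric] by (rule measure_pmf.prob_le_1)
  then have "real n ^ 3 * (\<Sum>m<n. 2 ^ (n - Suc m) * level_prob n 0 m) \<le> real n ^ 3"
    by (rule mult_left_le) simp
  then show ?thesis
    using expected_potential_le[OF assms(2), of 0] by linarith
qed

lemma expected_potential_initial_ge:
  assumes "0 < n"
  shows "real M * real n * (real n - 1) / 8 \<le> expected_potential n M 0"
proof -
  have "(\<Sum>i<n. real i * real M) \<le> tail_cost n M 0"
    unfolding tail_cost_def atLeast0LessThan by (rule sum_mono) (simp add: level_cost_def)
  moreover have "(\<Sum>i<n. real i) = real n * (real n - 1) / 2"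
    by (induction n) (simp_all add: field_simps)
  ultimately have "real M * (real n * (real n - 1) / 2) \<le> tail_cost n M 0"
    by (simp add: sum_distrib_right[symmetric] mult.commute)
  moreover have "level_prob n 0 0 * potential n M 0 \<le> expected_potential n M 0"
    unfolding expected_potential_def using assms
    by (intro member_le_sum)
       (auto intro!: mult_nonneg_nonneg divide_nonneg_nonneg level_prob_nonneg potential_nonneg)
  ultimately show ?thesis
    using level_cost_nonneg[of n M 0] by (simp add: potential_def)
qed

theorem theorem4:
  fixes c :: real
  assumes "0 < c" and "c \<le> 1"
  shows "\<exists>C1 C2 :: real. \<exists>N :: nat. 0 < C1 \<and> 0 < C2 \<and>
           (\<forall>n M :: nat. n \<ge> N \<longrightarrow> real M = c * real n \<longrightarrow>
              ennreal (C1 * real n ^ 3) \<le> ia_expected_runtime n M (leading_ones n) \<and>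
              ia_expected_runtime n M (leading_ones n) \<le> ennreal (C2 * real n ^ 3))"
proof (intro exI conjI allI impI)
  show "0 < c / 16" "(0 :: real) < 2" using assms by auto
  fix n M :: nat
  assume n: "nat \<lceil>2 / c\<rceil> + 2 \<le> n" and M: "real M = c * real n"
  then have "2 / c \<le> real n" by linarith
  then have "1 \<le> M" "M \<le> n"
    using assms M mult_right_mono[of c 1 "real n"] by (auto simp: field_simps)
  note runtime = ia_expected_runtime_eq[OF this]
  have "c / 16 * real n ^ 3 \<le> real M * real n * (real n - 1) / 8"
    using n M assms by (simp add: power3_eq_cube field_simps mult_left_mono)
  also have "\<dots> \<le> expected_potential n M 0"
    using n by (intro expected_potential_initial_ge) simp
  finally show "ennreal (c / 16 * real n ^ 3) \<le> ia_expected_runtime n M (leading_ones n)"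
    unfolding runtime by (rule add_increasing[OF zero_le ennreal_leI])
  have "1 \<le> real n ^ 3" using n by (simp add: one_le_power)
  then have "1 + expected_potential n M 0 \<le> 2 * real n ^ 3"
    using expected_potential_initial_le[OF \<open>1 \<le> M\<close> \<open>M \<le> n\<close>] by simp
  moreover have "1 + ennreal (expected_potential n M 0) = ennreal (1 + expected_potential n M 0)"
    using expected_potential_nonneg by (simp add: ennreal_plus)
  ultimately show "ia_expected_runtime n M (leading_ones n) \<le> ennreal (2 * real n ^ 3)"
    unfolding runtime by (simp add: ennreal_leI)
qed

end
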